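(* Let $R$ be a finite ring with identity, $\alpha\in(0,1)$, $Q$ a probability distribution on $R$ constant on similarity classes, and $(X_t)$ the Markov chain defined below. Then for every fixed $\epsilon<1/2$ (with $\epsilon>0$), the mixing time satisfies \[t_{\mathrm{mix}}(\epsilon)\le\frac{\log\epsilon}{\log(1-\alpha)}+1.\]
   Context: $a,b$ are similar if $b=uau^{-1}$ for some unit $u$ of $R$. The Markov chain $(X_t)$ on $R$: at each step an independent coin with Heads probability $\alpha$ is tossed; on Heads, $X_{t+1}=X_t+Y$ with $Y$ uniform on $R$; on Tails, $X_{t+1}=Z\cdot X_t$ with $Z$ drawn from $Q$ (all independent). Let $M_R$ be its transition matrix and $\pi$ its stationary distribution. The total variation distance is $\|\mu-\nu\|_{TV}=\frac12\sum_{x}|\mu(x)-\nu(x)|$, $d(t)=\max_{x\in R}\|M_R^t(x,\cdot)-\pi\|_{TV}$, and $t_{\mathrm{mix}}(\epsilon)=\min\{t\mid d(t)\le\epsilon\}$. *)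

theory Defs
  imports Complex_Main "HOL-Library.Cardinality"
begin

definition ring_unit :: "'a::ring_1 \<Rightarrow> bool" where
  "ring_unit u \<longleftrightarrow> (\<exists>v. u * v = 1 \<and> v * u = 1)"

definition similar :: "'a::ring_1 \<Rightarrow> 'a \<Rightarrow> bool" where
  "similar a b \<longleftrightarrow> (\<exists>u v. u * v = 1 \<and> v * u = 1 \<and> b = u * a * v)"

text \<open>Transition matrix of the chain: with prob. alpha add a uniform element,
  with prob. 1 - alpha multiply on the left by Z drawn from Q.\<close>

definition trans_mat :: "real \<Rightarrow> ('a::{ring_1,finite} \<Rightarrow> real) \<Rightarrow> 'a \<Rightarrow> 'a \<Rightarrow> real" where
  "trans_mat \<alpha> Q x y = \<alpha> / real CARD('a) + (1 - \<alpha>) * (\<Sum>z\<in>{z. z * x = y}. Q z)"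

fun mat_pow :: "('a::finite \<Rightarrow> 'a \<Rightarrow> real) \<Rightarrow> nat \<Rightarrow> 'a \<Rightarrow> 'a \<Rightarrow> real" where
  "mat_pow M 0 x y = (if x = y then 1 else 0)"
| "mat_pow M (Suc t) x y = (\<Sum>z\<in>UNIV. mat_pow M t x z * M z y)"

definition prob_dist :: "('a::finite \<Rightarrow> real) \<Rightarrow> bool" where
  "prob_dist p \<longleftrightarrow> (\<forall>x. p x \<ge> 0) \<and> (\<Sum>x\<in>UNIV. p x) = 1"

definition stationary :: "('a::finite \<Rightarrow> 'a \<Rightarrow> real) \<Rightarrow> ('a \<Rightarrow> real) \<Rightarrow> bool" where
  "stationary M \<pi> \<longleftrightarrow> prob_dist \<pi> \<and> (\<forall>y. (\<Sum>x\<in>UNIV. \<pi> x * M x y) = \<pi> y)"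

definition tv_dist :: "('a::finite \<Rightarrow> real) \<Rightarrow> ('a \<Rightarrow> real) \<Rightarrow> real" where
  "tv_dist \<mu> \<nu> = (1/2) * (\<Sum>x\<in>UNIV. \<bar>\<mu> x - \<nu> x\<bar>)"

definition dist_t :: "('a::finite \<Rightarrow> 'a \<Rightarrow> real) \<Rightarrow> ('a \<Rightarrow> real) \<Rightarrow> nat \<Rightarrow> real" where
  "dist_t M \<pi> t = Max (range (\<lambda>x. tv_dist (mat_pow M t x) \<pi>))"

definition t_mix :: "('a::finite \<Rightarrow> 'a \<Rightarrow> real) \<Rightarrow> ('a \<Rightarrow> real) \<Rightarrow> real \<Rightarrow> nat" where
  "t_mix M \<pi> \<epsilon> = (LEAST t. dist_t M \<pi> t \<le> \<epsilon>)"

end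

theory Submission
  imports Defs
begin

text \<open>Each step of the chain is a mixture: with probability \<alpha> the new state is uniform on R,
  whatever the current state. Hence every row of the transition matrix dominates \<alpha> times the
  uniform distribution (a Doeblin condition), so the matrix contracts differences of
  distributions in l1-norm by the factor 1 - \<alpha>; the distance to stationarity after t steps is
  therefore at most (1 - \<alpha>)^t. Neither the ring structure nor the assumption that Q is
  constant on similarity classes plays any role in this bound.\<close>

definition stochastic :: "('a::finite \<Rightarrow> 'a \<Rightarrow> real) \<Rightarrow> bool" where
  "stochastic M \<longleftrightarrow> (\<forall>x. prob_dist (M x))"

definition left_mult_kernel :: "('a::{times,finite} \<Rightarrow> real) \<Rightarrow> 'a \<Rightarrow> 'a \<Rightarrow> real" where
  "left_mult_kernel Q x y = (\<Sum>z | z * x = y. Q z)"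

lemma stochastic_left_mult_kernel:
  assumes "prob_dist Q"
  shows "stochastic (left_mult_kernel Q)"
  unfolding stochastic_def prob_dist_def
proof (intro allI conjI)
  fix x y
  show "0 \<le> left_mult_kernel Q x y"
    using assms unfolding left_mult_kernel_def prob_dist_def by (auto intro: sum_nonneg)
next
  fix x
  have "(\<Sum>y\<in>UNIV. left_mult_kernel Q x y) = (\<Sum>y\<in>UNIV. \<Sum>z\<in>UNIV. if z * x = y then Q z else 0)"
    unfolding left_mult_kernel_def by (simp add: sum.If_cases)
  also have "\<dots> = (\<Sum>z\<in>UNIV. Q z)"
    by (subst sum.swap) simp
  finally show "(\<Sum>y\<in>UNIV. left_mult_kernel Q x y) = 1"
    using assms by (simp add: prob_dist_def)
qed

lemma prob_dist_uniform: "prob_dist (\<lambda>_::'a::finite. 1 / real CARD('a))"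
  by (simp add: prob_dist_def)

lemma stochastic_mixture:
  assumes "prob_dist \<nu>" and "stochastic K" and "0 \<le> \<alpha>" and "\<alpha> \<le> 1"
  shows "stochastic (\<lambda>x y. \<alpha> * \<nu> y + (1 - \<alpha>) * K x y)"
  using assms by (simp add: stochastic_def prob_dist_def sum.distrib sum_distrib_left[symmetric])

lemma trans_mat_eq_mixture:
  "trans_mat \<alpha> Q = (\<lambda>x y. \<alpha> * (1 / real CARD('a)) + (1 - \<alpha>) * left_mult_kernel Q x y)"
  for Q :: "'a::{ring_1,finite} \<Rightarrow> real"
  by (simp add: fun_eq_iff trans_mat_def left_mult_kernel_def)

lemma stochastic_mat_pow:
  assumes "stochastic M"
  shows "stochastic (mat_pow M t)"
proof (induction t)
  case 0
  show ?case by (simp add: stochastic_def prob_dist_def)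
next
  case (Suc t)
  have nonneg: "0 \<le> mat_pow M (Suc t) x y" for x y
    using Suc assms by (auto simp: stochastic_def prob_dist_def intro!: sum_nonneg)
  have "(\<Sum>y\<in>UNIV. mat_pow M (Suc t) x y) = (\<Sum>z\<in>UNIV. mat_pow M t x z * (\<Sum>y\<in>UNIV. M z y))" for x
    by (simp add: sum_distrib_left) (rule sum.swap)
  also have "\<dots> x = 1" for x
    using Suc assms by (simp add: stochastic_def prob_dist_def)
  finally show ?case
    using nonneg by (simp add: stochastic_def prob_dist_def)
qed

lemma sum_abs_mult_stochastic_le:
  assumes "stochastic K"
  shows "(\<Sum>y\<in>UNIV. \<bar>\<Sum>x\<in>UNIV. d x * K x y\<bar>) \<le> (\<Sum>x\<in>UNIV. \<bar>d x\<bar>)"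
proof -
  have K: "0 \<le> K x y" "(\<Sum>y\<in>UNIV. K x y) = 1" for x y
    using assms by (auto simp: stochastic_def prob_dist_def)
  have "(\<Sum>y\<in>UNIV. \<bar>\<Sum>x\<in>UNIV. d x * K x y\<bar>) \<le> (\<Sum>y\<in>UNIV. \<Sum>x\<in>UNIV. \<bar>d x\<bar> * K x y)"
    by (intro sum_mono order.trans[OF sum_abs]) (simp add: abs_mult K)
  also have "\<dots> = (\<Sum>x\<in>UNIV. \<bar>d x\<bar> * (\<Sum>y\<in>UNIV. K x y))"
    by (subst sum.swap) (simp add: sum_distrib_left)
  finally show ?thesis
    by (simp add: K)
qed

lemma sum_abs_mult_mixture_le:
  assumes "stochastic K" and "0 \<le> \<alpha>" and "\<alpha> \<le> 1" and "(\<Sum>x\<in>UNIV. d x) = 0"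
  shows "(\<Sum>y\<in>UNIV. \<bar>\<Sum>x\<in>UNIV. d x * (\<alpha> * \<nu> y + (1 - \<alpha>) * K x y)\<bar>)
    \<le> (1 - \<alpha>) * (\<Sum>x\<in>UNIV. \<bar>d x\<bar>)"
proof -
  have "(\<Sum>x\<in>UNIV. d x * (\<alpha> * \<nu> y + (1 - \<alpha>) * K x y))
      = \<alpha> * \<nu> y * (\<Sum>x\<in>UNIV. d x) + (1 - \<alpha>) * (\<Sum>x\<in>UNIV. d x * K x y)" for y
    unfolding distrib_left sum.distrib by (simp add: sum_distrib_left mult_ac)
  then have "(\<Sum>y\<in>UNIV. \<bar>\<Sum>x\<in>UNIV. d x * (\<alpha> * \<nu> y + (1 - \<alpha>) * K x y)\<bar>)
      = (\<Sum>y\<in>UNIV. (1 - \<alpha>) * \<bar>\<Sum>x\<in>UNIV. d x * K x y\<bar>)"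
    using assms(3,4) by (simp add: abs_mult)
  also have "\<dots> = (1 - \<alpha>) * (\<Sum>y\<in>UNIV. \<bar>\<Sum>x\<in>UNIV. d x * K x y\<bar>)"
    by (rule sum_distrib_left[symmetric])
  also have "\<dots> \<le> (1 - \<alpha>) * (\<Sum>x\<in>UNIV. \<bar>d x\<bar>)"
    using assms(1,3) by (intro mult_left_mono sum_abs_mult_stochastic_le) auto
  finally show ?thesis .
qed

lemma tv_dist_le_1:
  assumes "prob_dist \<mu>" and "prob_dist \<nu>"
  shows "tv_dist \<mu> \<nu> \<le> 1"
proof -
  have "(\<Sum>x\<in>UNIV. \<bar>\<mu> x - \<nu> x\<bar>) \<le> (\<Sum>x\<in>UNIV. \<mu> x + \<nu> x)"
    using assms by (intro sum_mono) (auto simp: prob_dist_def abs_le_iff)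
  then show ?thesis
    using assms by (simp add: tv_dist_def prob_dist_def sum.distrib)
qed

lemma tv_dist_mat_pow_stationary_le:
  assumes "stochastic M" and "stationary M \<pi>" and "0 \<le> c"
    and contraction: "\<And>d. (\<Sum>x\<in>UNIV. d x) = 0 \<Longrightarrow>
      (\<Sum>y\<in>UNIV. \<bar>\<Sum>x\<in>UNIV. d x * M x y\<bar>) \<le> c * (\<Sum>x\<in>UNIV. \<bar>d x\<bar>)"
  shows "tv_dist (mat_pow M t x) \<pi> \<le> c ^ t"
proof (induction t)
  case 0
  show ?case
    using tv_dist_le_1[of "mat_pow M 0 x" \<pi>] stochastic_mat_pow[OF assms(1)] assms(2)
    by (simp del: mat_pow.simps add: stochastic_def stationary_def)
next
  case (Suc t)
  define d where "d z = mat_pow M t x z - \<pi> z" for z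
  have step: "mat_pow M (Suc t) x y - \<pi> y = (\<Sum>z\<in>UNIV. d z * M z y)" for y
    using assms(2) by (simp add: d_def stationary_def left_diff_distrib sum_subtractf)
  have mass_zero: "(\<Sum>z\<in>UNIV. d z) = 0"
    using stochastic_mat_pow[OF assms(1)] assms(2)
    by (simp add: d_def sum_subtractf stochastic_def stationary_def prob_dist_def)
  have "tv_dist (mat_pow M (Suc t) x) \<pi> = 1/2 * (\<Sum>y\<in>UNIV. \<bar>\<Sum>z\<in>UNIV. d z * M z y\<bar>)"
    unfolding tv_dist_def step ..
  also have "\<dots> \<le> 1/2 * (c * (\<Sum>z\<in>UNIV. \<bar>d z\<bar>))"
    using contraction[OF mass_zero] by simp
  also have "\<dots> = c * tv_dist (mat_pow M t x) \<pi>"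
    by (simp add: tv_dist_def d_def)
  also have "\<dots> \<le> c * c ^ t"
    using Suc assms(3) by (rule mult_left_mono)
  finally show ?case
    by (simp only: power_Suc)
qed

lemma dist_t_le:
  assumes "\<And>x. tv_dist (mat_pow M t x) \<pi> \<le> b"
  shows "dist_t M \<pi> t \<le> b"
  using assms by (simp add: dist_t_def)

lemma trans_mat_dist_t_le:
  fixes Q :: "'a::{ring_1,finite} \<Rightarrow> real"
  assumes "prob_dist Q" and "0 \<le> \<alpha>" and "\<alpha> \<le> 1" and "stationary (trans_mat \<alpha> Q) \<pi>"
  shows "dist_t (trans_mat \<alpha> Q) \<pi> t \<le> (1 - \<alpha>) ^ t"
proof (intro dist_t_le tv_dist_mat_pow_stationary_le)
  have K: "stochastic (left_mult_kernel Q)"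
    using assms(1) by (rule stochastic_left_mult_kernel)
  show "stochastic (trans_mat \<alpha> Q)"
    unfolding trans_mat_eq_mixture using prob_dist_uniform K assms(2,3) by (rule stochastic_mixture)
  show "(\<Sum>y\<in>UNIV. \<bar>\<Sum>x\<in>UNIV. d x * trans_mat \<alpha> Q x y\<bar>) \<le> (1 - \<alpha>) * (\<Sum>x\<in>UNIV. \<bar>d x\<bar>)"
    if "(\<Sum>x\<in>UNIV. d x) = 0" for d
    unfolding trans_mat_eq_mixture using K assms(2,3) that by (rule sum_abs_mult_mixture_le)
qed (use assms in auto)

lemma power_nat_ceiling_log_le:
  fixes c \<epsilon> :: real
  assumes "0 < c" and "c < 1" and "0 < \<epsilon>"
  shows "c ^ nat \<lceil>ln \<epsilon> / ln c\<rceil> \<le> \<epsilon>"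
proof (cases "\<epsilon> < 1")
  case True
  have "0 \<le> ln \<epsilon> / ln c"
    using assms True by (simp add: divide_nonpos_neg)
  then have "real (nat \<lceil>ln \<epsilon> / ln c\<rceil>) * ln c \<le> ln \<epsilon> / ln c * ln c"
    using assms by (intro mult_right_mono_neg) auto
  then have "ln (c ^ nat \<lceil>ln \<epsilon> / ln c\<rceil>) \<le> ln \<epsilon>"
    using assms by (simp add: ln_realpow)
  then show ?thesis
    using assms by simp
next
  case False
  then have "nat \<lceil>ln \<epsilon> / ln c\<rceil> = 0"
    using assms by (simp add: divide_nonneg_neg)
  then show ?thesis
    using False by simp
qed

theorem theorem4p1:
  fixes \<alpha> \<epsilon> :: real and Q :: "'a::{ring_1,finite} \<Rightarrow> real" and \<pi> :: "'a \<Rightarrow> real"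
  assumes "0 < \<alpha>" and "\<alpha> < 1"
    and "prob_dist Q"
    and "\<And>a b. similar a b \<Longrightarrow> Q a = Q b"
    and "stationary (trans_mat \<alpha> Q) \<pi>"
    and "0 < \<epsilon>" and "\<epsilon> < 1/2"
  shows "real (t_mix (trans_mat \<alpha> Q) \<pi> \<epsilon>) \<le> ln \<epsilon> / ln (1 - \<alpha>) + 1"
proof -
  define T where "T = nat \<lceil>ln \<epsilon> / ln (1 - \<alpha>)\<rceil>"
  have "dist_t (trans_mat \<alpha> Q) \<pi> T \<le> (1 - \<alpha>) ^ T"
    using assms(1,2,3,5) by (intro trans_mat_dist_t_le) auto
  also have "\<dots> \<le> \<epsilon>"
    unfolding T_def using assms(1,2,6) by (intro power_nat_ceiling_log_le) auto
  finally have "t_mix (trans_mat \<alpha> Q) \<pi> \<epsilon> \<le> T"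
    unfolding t_mix_def by (rule Least_le)
  moreover have "0 \<le> ln \<epsilon> / ln (1 - \<alpha>)"
    using assms(1,2,6,7) by (simp add: divide_nonpos_neg)
  ultimately show ?thesis
    unfolding T_def by linarith
qed

end
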